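(* Let $G\in\mathbb{G}_\pi$ have vertex set $V=\{v_1,\dots,v_n\}$ with $n>2$, and let $T=V\setminus\{v_1,v_2\}$. Then $\mathcal{R}(G;V\setminus\{v_1\},T)=\mathcal{R}(G;V\setminus\{v_2\},T)$.
   Context: Let $\mathbb{W}$ be the field of rational functions $p/q$ in a complex variable $\lambda$ ($p,q\in\mathbb{C}[\lambda]$, $q\ne0$); $\pi(p/q)=\deg p-\deg q$ (zero counts as $\pi\le 0$). A graph $G=(V,E,\omega)$ is a finite directed graph, edges $E$ (loops allowed, at most one edge $e_{ij}$ from $v_i$ to $v_j$), weights $\omega:E\to\mathbb{W}\setminus\{0\}$, $\omega(e_{ij})=0$ for non-edges, $M(G)_{ij}=\omega(e_{ij})$. $\mathbb{G}_\pi$ is the set of graphs with $\pi(M(G)_{ij})\le0$ for all entries. $\bar S=V\setminus S$; $\ell(G)$ is $G$ without loops. A path is a sequence of distinct vertices $u_1,\dots,u_m$ ($m\ge2$) with edges $u_k\to u_{k+1}$; a cycle is the same with $u_1=u_m$, $u_1,\dots,u_{m-1}$ distinct; $u_2,\dots,u_{m-1}$ are interior. A nonempty $S\subseteq V$ is a structural set ($S\in st(G)$) if $\ell(G)|_{\bar S}$ has no cycles and $\omega(e_{ii})\ne\lambda$ for $v_i\in\bar S$. For $v_i,v_j\in S$, $\mathcal{B}_{ij}(G;S)$ = paths or cycles from $v_i$ to $v_j$ with no interior vertex in $S$; $\mathcal{P}_\omega(u_1,\dots,u_m)=\omega(u_1u_2)\prod_{k=2}^{m-1}\frac{\omega(u_ku_{k+1})}{\lambda-\omega(u_ku_k)}$;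 $\mathcal{R}_S(G)$ is the graph on $S$ with an edge $v_i\to v_j$ iff $\mathcal{B}_{ij}(G;S)\ne\emptyset$, of weight $\sum_{\beta\in\mathcal{B}_{ij}(G;S)}\mathcal{P}_\omega(\beta)$. For $S_2\subseteq S_1\subseteq V$ with $S_1\in st(G)$ and $S_2\in st(\mathcal{R}_{S_1}(G))$, $\mathcal{R}(G;S_1,S_2)=\mathcal{R}_{S_2}(\mathcal{R}_{S_1}(G))$. *)

theory Defs
  imports "HOL-Computational_Algebra.Computational_Algebra"
begin

type_synonym ratfun = "complex poly fract"

definition lam :: ratfun where
  "lam = Fract [:0, 1:] 1"

text \<open>pi(p/q) = deg p - deg q for any representation f = p/q, q ~= 0 (well defined);
  pi 0 is set to 0, so 0 counts as pi <= 0.\<close>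
definition pideg :: "ratfun \<Rightarrow> int" where
  "pideg f = (if f = 0 then 0 else
     (THE d. \<exists>p q. q \<noteq> 0 \<and> f = Fract p q \<and> d = int (degree p) - int (degree q)))"

text \<open>A weighted directed graph: vertex set, edge set (loops allowed, at most one
  edge per ordered pair), weight function (the matrix M(G)).\<close>
record 'v graph =
  verts :: "'v set"
  arcs  :: "('v \<times> 'v) set"
  wt    :: "'v \<Rightarrow> 'v \<Rightarrow> ratfun"

definition wf_graph :: "'v graph \<Rightarrow> bool" where
  "wf_graph G \<longleftrightarrow> finite (verts G) \<and> arcs G \<subseteq> verts G \<times> verts G \<and>
     (\<forall>i j. ((i, j) \<in> arcs G \<longrightarrow> wt G i j \<noteq> 0) \<and> ((i, j) \<notin> arcs G \<longrightarrow> wt G i j = 0))"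

definition in_Gpi :: "'v graph \<Rightarrow> bool" where
  "in_Gpi G \<longleftrightarrow> (\<forall>i\<in>verts G. \<forall>j\<in>verts G. pideg (wt G i j) \<le> 0)"

definition walk_edges :: "'v graph \<Rightarrow> 'v list \<Rightarrow> bool" where
  "walk_edges G us \<longleftrightarrow> (\<forall>k. Suc k < length us \<longrightarrow> (us ! k, us ! Suc k) \<in> arcs G)"

definition is_path :: "'v graph \<Rightarrow> 'v list \<Rightarrow> bool" where
  "is_path G us \<longleftrightarrow> length us \<ge> 2 \<and> distinct us \<and> walk_edges G us"

definition is_cycle :: "'v graph \<Rightarrow> 'v list \<Rightarrow> bool" where
  "is_cycle G us \<longleftrightarrow> length us \<ge> 2 \<and> hd us = last us \<and> distinct (butlast us) \<and> walk_edges G us"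

definition noloops :: "'v graph \<Rightarrow> 'v graph" where
  "noloops G = G\<lparr>arcs := {(i, j). (i, j) \<in> arcs G \<and> i \<noteq> j},
                  wt := (\<lambda>i j. if i = j then 0 else wt G i j)\<rparr>"

definition restrict :: "'v graph \<Rightarrow> 'v set \<Rightarrow> 'v graph" where
  "restrict G U = \<lparr>verts = verts G \<inter> U, arcs = arcs G \<inter> (U \<times> U),
                   wt = (\<lambda>i j. if i \<in> U \<and> j \<in> U then wt G i j else 0)\<rparr>"

definition has_cycle :: "'v graph \<Rightarrow> bool" where
  "has_cycle G \<longleftrightarrow> (\<exists>us. is_cycle G us)"

definition st :: "'v graph \<Rightarrow> 'v set set" where
  "st G = {S. S \<noteq> {} \<and> S \<subseteq> verts G \<and>
              \<not> has_cycle (restrict (noloops G) (verts G - S)) \<and>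
              (\<forall>i \<in> verts G - S. wt G i i \<noteq> lam)}"

definition Bpaths :: "'v graph \<Rightarrow> 'v set \<Rightarrow> 'v \<Rightarrow> 'v \<Rightarrow> 'v list set" where
  "Bpaths G S i j = {us. (is_path G us \<or> is_cycle G us) \<and> hd us = i \<and> last us = j \<and>
                        set (butlast (tl us)) \<inter> S = {}}"

definition Pw :: "'v graph \<Rightarrow> 'v list \<Rightarrow> ratfun" where
  "Pw G us = wt G (us ! 0) (us ! 1) *
     (\<Prod>k\<in>{1..<length us - 1}. wt G (us ! k) (us ! Suc k) / (lam - wt G (us ! k) (us ! k)))"

definition Rred :: "'v set \<Rightarrow> 'v graph \<Rightarrow> 'v graph" where
  "Rred S G = \<lparr>verts = S,
               arcs = {(i, j). i \<in> S \<and> j \<in> S \<and> Bpaths G S i j \<noteq> {}},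
               wt = (\<lambda>i j. if i \<in> S \<and> j \<in> S then (\<Sum>\<beta>\<in>Bpaths G S i j. Pw G \<beta>) else 0)\<rparr>"

definition R2 :: "'v graph \<Rightarrow> 'v set \<Rightarrow> 'v set \<Rightarrow> 'v graph" where
  "R2 G S1 S2 = Rred S2 (Rred S1 G)"

end

(* The weights of a graph in G_pi are proper rational functions (numerator degree at most the
   denominator degree), and proper functions form a subring, while lambda - f has a numerator of
   strictly larger degree; so no denominator lambda - w below vanishes. Reducing G over V - {c}
   is one step of Gaussian elimination on lambda I - M(G): the new weights are
   w_ij + w_ic w_cj / (lambda - w_cc), again proper. Hence reducing over V - {a} and then
   V - {a, b} eliminates a and then b, and the resulting weights are the entries of the Schur
   complement of the {a, b} block, which does not depend on the order of elimination. *)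

theory Submission
  imports Defs
begin

definition proper_ratfun :: "ratfun \<Rightarrow> bool" where
  "proper_ratfun f \<longleftrightarrow> (\<exists>p q. q \<noteq> 0 \<and> f = Fract p q \<and> degree p \<le> degree q)"

lemma Fract_eq_0_iff: "q \<noteq> 0 \<Longrightarrow> Fract p q = 0 \<longleftrightarrow> p = 0"
  by (simp add: Zero_fract_def eq_fract)

lemma pideg_Fract:
  assumes "p \<noteq> 0" "q \<noteq> 0"
  shows "pideg (Fract p q) = int (degree p) - int (degree q)"
  unfolding pideg_def
proof (simp add: assms Fract_eq_0_iff, rule the_equality)
  show "\<exists>p' q'. q' \<noteq> 0 \<and> Fract p q = Fract p' q' \<and>
      int (degree p) - int (degree q) = int (degree p') - int (degree q')"
    using assms(2) by (intro exI[of _ p] exI[of _ q]) simp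
next
  fix d assume "\<exists>p' q'. q' \<noteq> 0 \<and> Fract p q = Fract p' q' \<and> d = int (degree p') - int (degree q')"
  then obtain p' q' where q': "q' \<noteq> 0" and eq: "Fract p q = Fract p' q'"
    and d: "d = int (degree p') - int (degree q')" by blast
  have "p' \<noteq> 0" using eq q' assms Fract_eq_0_iff by metis
  moreover have "p * q' = p' * q" using eq q' assms by (simp add: eq_fract)
  ultimately have "degree p + degree q' = degree p' + degree q"
    using assms q' by (metis degree_mult_eq)
  then show "d = int (degree p) - int (degree q)" using d by linarith
qed

lemma proper_ratfun_if_pideg_nonpos:
  assumes "pideg f \<le> 0"
  shows "proper_ratfun f"
proof (cases f)
  case (Fract p q)
  show ?thesis
  proof (cases "p = 0")
    case True
    then show ?thesis using Fract unfolding proper_ratfun_def by (metis degree_0 le0)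
  next
    case False
    then show ?thesis using Fract assms pideg_Fract unfolding proper_ratfun_def by fastforce
  qed
qed

lemma proper_ratfun_add:
  assumes "proper_ratfun f" "proper_ratfun g"
  shows "proper_ratfun (f + g)"
proof -
  obtain p q p' q' where q: "q \<noteq> 0" "q' \<noteq> 0" and fg: "f = Fract p q" "g = Fract p' q'"
    and deg: "degree p \<le> degree q" "degree p' \<le> degree q'"
    using assms unfolding proper_ratfun_def by blast
  have "degree (p * q' + p' * q) \<le> max (degree (p * q')) (degree (p' * q))"
    by (rule degree_add_le_max)
  also have "\<dots> \<le> degree (q * q')"
    using deg q degree_mult_le[of p q'] degree_mult_le[of p' q] by (simp add: degree_mult_eq)
  finally show ?thesis
    using q fg unfolding proper_ratfun_def by (intro exI[of _ "p * q' + p' * q"] exI[of _ "q * q'"]) simp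
qed

lemma proper_ratfun_mult:
  assumes "proper_ratfun f" "proper_ratfun g"
  shows "proper_ratfun (f * g)"
proof -
  obtain p q p' q' where q: "q \<noteq> 0" "q' \<noteq> 0" and fg: "f = Fract p q" "g = Fract p' q'"
    and deg: "degree p \<le> degree q" "degree p' \<le> degree q'"
    using assms unfolding proper_ratfun_def by blast
  have "degree (p * p') \<le> degree (q * q')"
    using deg q degree_mult_le[of p p'] by (simp add: degree_mult_eq)
  then show ?thesis
    using q fg unfolding proper_ratfun_def by (intro exI[of _ "p * p'"] exI[of _ "q * q'"]) simp
qed

lemma lam_minus_proper_ratfun:
  assumes "proper_ratfun f"
  obtains p q where "q \<noteq> 0" "lam - f = Fract p q" "degree p = Suc (degree q)"
proof -
  obtain p q where q: "q \<noteq> 0" and f: "f = Fract p q" and deg: "degree p \<le> degree q"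
    using assms unfolding proper_ratfun_def by blast
  have "degree ([:0, 1:] * q) = Suc (degree q)"
    using q by (simp add: degree_mult_eq)
  then have "degree ([:0, 1:] * q + - p) = Suc (degree q)"
    using deg degree_add_eq_left[of "- p" "[:0, 1:] * q"] by simp
  moreover have "lam - f = Fract ([:0, 1:] * q + - p) q"
    using q f unfolding lam_def by simp
  ultimately show ?thesis using that q by blast
qed

lemma lam_minus_proper_ratfun_nonzero:
  assumes "proper_ratfun f"
  shows "lam - f \<noteq> 0"
proof -
  obtain p q where "q \<noteq> 0" "lam - f = Fract p q" "degree p = Suc (degree q)"
    using lam_minus_proper_ratfun[OF assms] .
  then show ?thesis using Fract_eq_0_iff by force
qed

lemma proper_ratfun_divide_lam_minus:
  assumes "proper_ratfun g" "proper_ratfun f"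
  shows "proper_ratfun (g / (lam - f))"
proof -
  obtain p q where "q \<noteq> 0" "lam - f = Fract p q" "degree p = Suc (degree q)"
    using lam_minus_proper_ratfun[OF assms(2)] .
  then have "proper_ratfun (inverse (lam - f))"
    unfolding proper_ratfun_def by (intro exI[of _ q] exI[of _ p]) auto
  then show ?thesis using assms(1) proper_ratfun_mult unfolding divide_inverse by blast
qed

definition weights_on_arcs :: "'v graph \<Rightarrow> bool" where
  "weights_on_arcs H \<longleftrightarrow> arcs H \<subseteq> verts H \<times> verts H \<and>
     (\<forall>i j. (i, j) \<notin> arcs H \<longrightarrow> wt H i j = 0)"

definition proper_weights :: "'v graph \<Rightarrow> bool" where
  "proper_weights H \<longleftrightarrow> (\<forall>i\<in>verts H. \<forall>j\<in>verts H. proper_ratfun (wt H i j))"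

definition elim_vertex :: "'v graph \<Rightarrow> 'v \<Rightarrow> 'v graph" where
  "elim_vertex H c =
     \<lparr>verts = verts H - {c},
      arcs = {(i, j). i \<in> verts H - {c} \<and> j \<in> verts H - {c} \<and>
                ((i, j) \<in> arcs H \<or> (i, c) \<in> arcs H \<and> (c, j) \<in> arcs H)},
      wt = (\<lambda>i j. if i \<in> verts H - {c} \<and> j \<in> verts H - {c}
                  then wt H i j + wt H i c * wt H c j / (lam - wt H c c) else 0)\<rparr>"

lemma walk_edges_two: "walk_edges H [x, y] \<longleftrightarrow> (x, y) \<in> arcs H"
  unfolding walk_edges_def by (auto simp: less_Suc_eq)

lemma walk_edges_three: "walk_edges H [x, y, z] \<longleftrightarrow> (x, y) \<in> arcs H \<and> (y, z) \<in> arcs H"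
  unfolding walk_edges_def by (auto simp: less_Suc_eq nth_Cons split: nat.splits)

lemma set_walk_subset_verts:
  assumes "walk_edges H us" "length us \<ge> 2" "arcs H \<subseteq> verts H \<times> verts H"
  shows "set us \<subseteq> verts H"
proof
  fix x assume "x \<in> set us"
  then obtain k where k: "k < length us" "us ! k = x" by (auto simp: in_set_conv_nth)
  show "x \<in> verts H"
  proof (cases "Suc k < length us")
    case True
    then show ?thesis using assms k unfolding walk_edges_def by blast
  next
    case False
    then have "Suc (k - 1) < length us" "Suc (k - 1) = k" using k assms(2) by auto
    then show ?thesis using assms k unfolding walk_edges_def by (metis mem_Sigma_iff subsetD)
  qed
qed

lemma distinct_butlast_if_path_or_cycle:
  "is_path H us \<or> is_cycle H us \<Longrightarrow> distinct (butlast us)"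
  unfolding is_path_def is_cycle_def using distinct_butlast by blast

text \<open>Outside \<open>S = V - {c}\<close> there is only \<open>c\<close>, so a member of \<open>\<B>\<^sub>i\<^sub>j\<close> has at most the
  interior vertex \<open>c\<close>.\<close>
lemma Bpaths_remove_vertex:
  assumes "arcs H \<subseteq> verts H \<times> verts H" "i \<noteq> c" "j \<noteq> c"
  shows "Bpaths H (verts H - {c}) i j =
    {us. us = [i, j] \<and> (i, j) \<in> arcs H \<or> us = [i, c, j] \<and> (i, c) \<in> arcs H \<and> (c, j) \<in> arcs H}"
proof (intro set_eqI iffI)
  fix us assume "us \<in> Bpaths H (verts H - {c}) i j"
  then have B: "is_path H us \<or> is_cycle H us" "hd us = i" "last us = j"
    "set (butlast (tl us)) \<inter> (verts H - {c}) = {}" unfolding Bpaths_def by auto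
  have len: "length us \<ge> 2" and walk: "walk_edges H us"
    using B(1) unfolding is_path_def is_cycle_def by auto
  define m where "m = butlast (tl us)"
  have us: "us = i # m @ [j]"
    using len B(2,3) unfolding m_def by (cases us) auto
  have "distinct m"
    using distinct_butlast_if_path_or_cycle[OF B(1)] unfolding m_def butlast_tl
    by (rule distinct_tl)
  moreover have "set m \<subseteq> {c}"
    using set_walk_subset_verts[OF walk len assms(1)] B(4) us unfolding m_def[symmetric] by auto
  ultimately have "m = [] \<or> m = [c]"
    by (cases m) (auto simp: subset_singleton_iff)
  then show "us \<in> {us. us = [i, j] \<and> (i, j) \<in> arcs H \<or>
                      us = [i, c, j] \<and> (i, c) \<in> arcs H \<and> (c, j) \<in> arcs H}"
    using walk us by (auto simp: walk_edges_two walk_edges_three)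
next
  fix us
  assume "us \<in> {us. us = [i, j] \<and> (i, j) \<in> arcs H \<or>
                     us = [i, c, j] \<and> (i, c) \<in> arcs H \<and> (c, j) \<in> arcs H}"
  then show "us \<in> Bpaths H (verts H - {c}) i j"
    using assms(2,3)
    by (cases "i = j") (auto simp: Bpaths_def is_path_def is_cycle_def walk_edges_two walk_edges_three)
qed

lemma Rred_remove_vertex:
  assumes "weights_on_arcs H"
  shows "Rred (verts H - {c}) H = elim_vertex H c"
proof -
  have arcs: "arcs H \<subseteq> verts H \<times> verts H"
    and zero: "\<And>i j. (i, j) \<notin> arcs H \<Longrightarrow> wt H i j = 0"
    using assms unfolding weights_on_arcs_def by auto
  have sum: "(\<Sum>\<beta>\<in>Bpaths H (verts H - {c}) i j. Pw H \<beta>) =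
      wt H i j + wt H i c * wt H c j / (lam - wt H c c)" if "i \<noteq> c" "j \<noteq> c" for i j
  proof -
    let ?direct = "(i, j) \<in> arcs H" and ?via_c = "(i, c) \<in> arcs H \<and> (c, j) \<in> arcs H"
    have "Bpaths H (verts H - {c}) i j =
        (if ?direct then {[i, j]} else {}) \<union> (if ?via_c then {[i, c, j]} else {})"
      unfolding Bpaths_remove_vertex[OF arcs that] by auto
    then have "(\<Sum>\<beta>\<in>Bpaths H (verts H - {c}) i j. Pw H \<beta>) =
        (if ?direct then Pw H [i, j] else 0) + (if ?via_c then Pw H [i, c, j] else 0)"
      by simp
    also have "\<dots> = wt H i j + wt H i c * wt H c j / (lam - wt H c c)"
      using zero by (auto simp: Pw_def)
    finally show ?thesis .
  qed
  have "arcs (Rred (verts H - {c}) H) = arcs (elim_vertex H c)"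
    using Bpaths_remove_vertex[OF arcs] by (auto simp: Rred_def elim_vertex_def)
  moreover have "wt (Rred (verts H - {c}) H) = wt (elim_vertex H c)"
    by (intro ext) (simp add: Rred_def elim_vertex_def sum)
  ultimately show ?thesis
    by (intro graph.equality) (simp_all add: Rred_def elim_vertex_def)
qed

lemma weights_on_arcs_elim_vertex:
  "weights_on_arcs H \<Longrightarrow> weights_on_arcs (elim_vertex H c)"
  unfolding weights_on_arcs_def elim_vertex_def by auto

lemma proper_weights_elim_vertex:
  assumes "proper_weights H" "c \<in> verts H"
  shows "proper_weights (elim_vertex H c)"
  using assms
  unfolding proper_weights_def elim_vertex_def
  by (auto intro!: proper_ratfun_add proper_ratfun_mult proper_ratfun_divide_lam_minus)

lemma no_cycle_on_one_vertex:
  assumes "U \<subseteq> {c}"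
  shows "\<not> has_cycle (restrict (noloops H) U)"
proof
  assume "has_cycle (restrict (noloops H) U)"
  then obtain us where "is_cycle (restrict (noloops H) U) us" unfolding has_cycle_def by blast
  then have "(us ! 0, us ! 1) \<in> arcs (restrict (noloops H) U)"
    unfolding is_cycle_def walk_edges_def by auto
  then show False using assms unfolding restrict_def noloops_def by auto
qed

lemma remove_vertex_in_st:
  assumes "verts H - {c} \<noteq> {}" "wt H c c \<noteq> lam"
  shows "verts H - {c} \<in> st H"
proof -
  have "verts H - (verts H - {c}) \<subseteq> {c}" by blast
  then have "\<not> has_cycle (restrict (noloops H) (verts H - (verts H - {c})))"
    by (rule no_cycle_on_one_vertex)
  then show ?thesis using assms unfolding st_def by auto
qed

text \<open>The right-hand side is symmetric under swapping \<open>a\<close> and \<open>b\<close>.\<close>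
lemma eliminate_two_unknowns:
  fixes A B xab xba xia xib xaj xbj :: "'a::field"
  assumes "A \<noteq> 0" "B - xba * xab / A \<noteq> 0"
  shows "xia * xaj / A + (xib + xia * xab / A) * (xbj + xba * xaj / A) / (B - xba * xab / A)
       = (xia * xaj * B + xia * xab * xbj + xib * xba * xaj + xib * xbj * A) / (A * B - xab * xba)"
proof -
  have "B - xba * xab / A = (A * B - xab * xba) / A"
    using assms(1) by (simp add: field_simps)
  with assms show ?thesis by (simp add: field_simps)
qed

lemma wt_elim_vertex_twice:
  assumes "proper_weights G" "a \<in> verts G" "b \<in> verts G" "a \<noteq> b"
    and "i \<in> verts G - {a, b}" "j \<in> verts G - {a, b}"
  defines "w \<equiv> wt G"
  shows "wt (elim_vertex (elim_vertex G a) b) i j = w i j +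
    (w i a * w a j * (lam - w b b) + w i a * w a b * w b j + w i b * w b a * w a j +
     w i b * w b j * (lam - w a a)) / ((lam - w a a) * (lam - w b b) - w a b * w b a)"
proof -
  let ?G1 = "elim_vertex G a"
  have wt1: "wt ?G1 x y = w x y + w x a * w a y / (lam - w a a)"
    if "x \<in> verts G - {a}" "y \<in> verts G - {a}" for x y
    using that unfolding elim_vertex_def w_def by simp
  have "proper_ratfun (w a a)" "proper_ratfun (wt ?G1 b b)"
    using assms proper_weights_elim_vertex[OF assms(1,2)]
    unfolding proper_weights_def elim_vertex_def w_def by auto
  then have "lam - w a a \<noteq> 0" "lam - wt ?G1 b b \<noteq> 0"
    using lam_minus_proper_ratfun_nonzero by blast+
  moreover have "lam - wt ?G1 b b = (lam - w b b) - w b a * w a b / (lam - w a a)"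
    using assms wt1 by simp
  ultimately show ?thesis
    using assms eliminate_two_unknowns[of "lam - w a a" "lam - w b b"]
    by (simp add: elim_vertex_def wt1 add.assoc diff_diff_eq)
qed

lemma verts_elim_vertex_twice:
  "verts (elim_vertex (elim_vertex G a) b) = verts G - {a, b}"
  by (auto simp: elim_vertex_def)

lemma wt_elim_vertex_outside:
  "i \<notin> verts (elim_vertex H c) \<or> j \<notin> verts (elim_vertex H c) \<Longrightarrow> wt (elim_vertex H c) i j = 0"
  by (auto simp: elim_vertex_def)

lemma arcs_elim_vertex_twice:
  assumes "b \<in> verts G"
  shows "arcs (elim_vertex (elim_vertex G a) b) =
     {(i, j). i \<in> verts G - {a, b} \<and> j \<in> verts G - {a, b} \<and>
       ((i, j) \<in> arcs G \<or> (i, a) \<in> arcs G \<and> (a, j) \<in> arcs G \<or>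
        ((i, b) \<in> arcs G \<or> (i, a) \<in> arcs G \<and> (a, b) \<in> arcs G) \<and>
        ((b, j) \<in> arcs G \<or> (b, a) \<in> arcs G \<and> (a, j) \<in> arcs G))}"
  using assms unfolding elim_vertex_def by auto

lemma elim_vertex_commute:
  assumes "proper_weights G" "a \<in> verts G" "b \<in> verts G"
  shows "elim_vertex (elim_vertex G a) b = elim_vertex (elim_vertex G b) a"
proof (cases "a = b")
  case False
  have verts: "verts (elim_vertex (elim_vertex G a) b) = verts (elim_vertex (elim_vertex G b) a)"
    by (simp add: verts_elim_vertex_twice insert_commute)
  have arcs: "arcs (elim_vertex (elim_vertex G a) b) = arcs (elim_vertex (elim_vertex G b) a)"
    unfolding arcs_elim_vertex_twice[OF assms(3)] arcs_elim_vertex_twice[OF assms(2)]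
    by (auto simp: insert_commute)
  have "wt (elim_vertex (elim_vertex G a) b) i j = wt (elim_vertex (elim_vertex G b) a) i j" for i j
  proof (cases "i \<in> verts G - {a, b} \<and> j \<in> verts G - {a, b}")
    case True
    then show ?thesis
      using wt_elim_vertex_twice[OF assms False] wt_elim_vertex_twice[OF assms(1,3,2)] False
      by (simp add: insert_commute algebra_simps)
  next
    case False
    then show ?thesis
      using wt_elim_vertex_outside verts_elim_vertex_twice by (metis insert_commute)
  qed
  then show ?thesis
    using verts arcs by (intro graph.equality) auto
qed simp

lemma R2_remove_two_vertices:
  assumes "weights_on_arcs G" "proper_weights G"
    and "a \<in> verts G" "b \<in> verts G" "a \<noteq> b" "verts G - {a, b} \<noteq> {}"
  shows "verts G - {a} \<in> st G \<and> verts G - {a, b} \<in> st (Rred (verts G - {a}) G) \<and>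
    R2 G (verts G - {a}) (verts G - {a, b}) = elim_vertex (elim_vertex G a) b"
proof -
  let ?G1 = "elim_vertex G a"
  have G1: "Rred (verts G - {a}) G = ?G1"
    using Rred_remove_vertex[OF assms(1)] .
  have verts_G1: "verts ?G1 - {b} = verts G - {a, b}"
    by (auto simp: elim_vertex_def)
  have "proper_ratfun (wt G a a)" "proper_ratfun (wt ?G1 b b)"
    using assms proper_weights_elim_vertex[OF assms(2,3)]
    unfolding proper_weights_def by (auto simp: elim_vertex_def)
  then have "wt G a a \<noteq> lam" "wt ?G1 b b \<noteq> lam"
    using lam_minus_proper_ratfun_nonzero by force+
  then have "verts G - {a} \<in> st G" "verts G - {a, b} \<in> st ?G1"
    using remove_vertex_in_st[of G a] remove_vertex_in_st[of ?G1 b] assms(6)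
    unfolding verts_G1 by blast+
  moreover have "R2 G (verts G - {a}) (verts G - {a, b}) = elim_vertex ?G1 b"
    unfolding R2_def G1 verts_G1[symmetric]
    using Rred_remove_vertex[OF weights_on_arcs_elim_vertex[OF assms(1)]] .
  ultimately show ?thesis using G1 by simp
qed

theorem lemma4:
  fixes G :: "'v graph" and a b :: 'v
  assumes "wf_graph G" and "in_Gpi G"
    and "a \<in> verts G" and "b \<in> verts G" and "a \<noteq> b"
    and "card (verts G) > 2"
  shows "verts G - {a} \<in> st G \<and> verts G - {a, b} \<in> st (Rred (verts G - {a}) G) \<and>
         verts G - {b} \<in> st G \<and> verts G - {a, b} \<in> st (Rred (verts G - {b}) G) \<and>
         R2 G (verts G - {a}) (verts G - {a, b}) = R2 G (verts G - {b}) (verts G - {a, b})"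
proof -
  have arcs: "weights_on_arcs G"
    using assms(1) unfolding wf_graph_def weights_on_arcs_def by blast
  have proper: "proper_weights G"
    using assms(2) proper_ratfun_if_pideg_nonpos unfolding in_Gpi_def proper_weights_def by blast
  have "verts G - {a, b} \<noteq> {}"
  proof
    assume "verts G - {a, b} = {}"
    then have "card (verts G) \<le> card {a, b}"
      by (intro card_mono) auto
    then show False using assms(6) by (simp add: card_insert_if split: if_splits)
  qed
  then show ?thesis
    using R2_remove_two_vertices[OF arcs proper assms(3-5)]
      R2_remove_two_vertices[OF arcs proper assms(4,3) assms(5)[symmetric]]
      elim_vertex_commute[OF proper assms(3,4)]
    by (simp add: insert_commute)
qed

end
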